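(* If $S$ is countable, then $\Omega(\phi)\in\mathcal A_\delta$ for every $\phi\in\mathcal H$.
   Context: Let $\mathcal H$ be a complex Hilbert space. A projection is a bounded self-adjoint idempotent operator; $\wedge_\alpha p_\alpha$ is the projection onto the intersection of ranges. Let $S$ be a set; for each $t\in S$ let $\Gamma(t)$ be a countable set and for $a\in\Gamma(t)$ let $p^t_a$ be a projection on $\mathcal H$ with $\sum_{a\in\Gamma(t)}p^t_a=I$ (strong convergence). Let $p^{t_1,\dots,t_k}_{a_1,\dots,a_k}=\wedge_{i=1}^kp^{t_i}_{a_i}$. Let $\Omega=\prod_{t\in S}\Gamma(t)$, $X_t(\omega)=\omega_t$, $\mathcal A$ the algebra of events $\{(X_{t_1},\dots,X_{t_k})\in G\}$ with $t_i\in S$ and $G\subset\Gamma(t_1)\times\dots\times\Gamma(t_k)$, and $\mathcal A_\delta$ the family of countable intersections of events in $\mathcal A$. For $\phi\in\mathcal H$, $\Omega(\phi)=\{\omega\in\Omega:$ for all $t_1,\dots,t_k\in S$, $p^{t_1,\dots,t_k}_{\omega_{t_1},\dots,\omega_{t_k}}\phi\neq0\}$. *)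

theory Defs
  imports "HOL-Analysis.Analysis"
begin

class complex_vector = real_vector +
  fixes scaleC :: "complex \<Rightarrow> 'a \<Rightarrow> 'a"
  assumes scaleC_add_right: "scaleC a (x + y) = scaleC a x + scaleC a y"
    and scaleC_add_left: "scaleC (a + b) x = scaleC a x + scaleC b x"
    and scaleC_scaleC: "scaleC a (scaleC b x) = scaleC (a * b) x"
    and scaleC_one: "scaleC 1 x = x"
    and scaleR_scaleC: "scaleR r x = scaleC (complex_of_real r) x"

class complex_inner = complex_vector + real_normed_vector +
  fixes cinner :: "'a \<Rightarrow> 'a \<Rightarrow> complex"
  assumes cinner_commute: "cinner x y = cnj (cinner y x)"
    and cinner_add_left: "cinner (x + y) z = cinner x z + cinner y z"
    and cinner_scaleC_left: "cinner (scaleC r x) y = cnj r * cinner x y"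
    and cinner_self_real_nonneg: "Im (cinner x x) = 0 \<and> Re (cinner x x) \<ge> 0"
    and cinner_self_zero_iff: "cinner x x = 0 \<longleftrightarrow> x = 0"
    and norm_eq_sqrt_cinner: "norm x = sqrt (Re (cinner x x))"

class chilbert_space = complex_inner + complete_space

definition is_projection :: "('h::chilbert_space \<Rightarrow> 'h) \<Rightarrow> bool" where
  "is_projection p \<longleftrightarrow>
     bounded_linear p \<and> (\<forall>c x. p (scaleC c x) = scaleC c (p x)) \<and>
     p \<circ> p = p \<and> (\<forall>x y. cinner (p x) y = cinner x (p y))"

definition proj_meet :: "('h::chilbert_space \<Rightarrow> 'h) set \<Rightarrow> ('h \<Rightarrow> 'h)" where
  "proj_meet P = (THE q. is_projection q \<and> range q = (\<Inter>p\<in>P. range p))"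

definition joint_proj :: "('t \<Rightarrow> 'a \<Rightarrow> ('h::chilbert_space \<Rightarrow> 'h)) \<Rightarrow> ('t \<times> 'a) list \<Rightarrow> ('h \<Rightarrow> 'h)" where
  "joint_proj p tas = proj_meet ((\<lambda>(t, a). p t a) ` set tas)"

text \<open>\<open>\<Omega> = \<Prod>_{t\<in>S} \<Gamma>(t)\<close>, elements are extensional functions on \<open>S\<close>; \<open>X_t(\<omega>) = \<omega> t\<close>.\<close>
definition sample_space :: "'t set \<Rightarrow> ('t \<Rightarrow> 'a set) \<Rightarrow> ('t \<Rightarrow> 'a) set" where
  "sample_space S \<Gamma> = PiE S \<Gamma>"

text \<open>The algebra \<open>\<A>\<close>: events \<open>{(X_{t_1},\<dots>,X_{t_k}) \<in> G}\<close>, tuples as lists.\<close>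
definition cyl_events :: "'t set \<Rightarrow> ('t \<Rightarrow> 'a set) \<Rightarrow> ('t \<Rightarrow> 'a) set set" where
  "cyl_events S \<Gamma> = {{\<omega> \<in> sample_space S \<Gamma>. map \<omega> ts \<in> G} | ts G.
      set ts \<subseteq> S \<and> G \<subseteq> listset (map \<Gamma> ts)}"

definition cyl_events_delta :: "'t set \<Rightarrow> ('t \<Rightarrow> 'a set) \<Rightarrow> ('t \<Rightarrow> 'a) set set" where
  "cyl_events_delta S \<Gamma> = {\<Inter>F | F. countable F \<and> F \<noteq> {} \<and> F \<subseteq> cyl_events S \<Gamma>}"

definition Omega_phi :: "'t set \<Rightarrow> ('t \<Rightarrow> 'a set) \<Rightarrow> ('t \<Rightarrow> 'a \<Rightarrow> ('h::chilbert_space \<Rightarrow> 'h))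
    \<Rightarrow> 'h \<Rightarrow> ('t \<Rightarrow> 'a) set" where
  "Omega_phi S \<Gamma> p \<phi> = {\<omega> \<in> sample_space S \<Gamma>. \<forall>ts. ts \<noteq> [] \<longrightarrow> set ts \<subseteq> S \<longrightarrow>
      joint_proj p (map (\<lambda>t. (t, \<omega> t)) ts) \<phi> \<noteq> 0}"

end

theory Submission
  imports Defs
begin

text \<open>Each of the conditions defining \<open>\<Omega>(\<phi>)\<close> concerns a single finite tuple of indices and hence
  only finitely many coordinates of \<open>\<omega>\<close>, so it defines an event of \<open>\<A>\<close>. When \<open>S\<close> is countable
  there are only countably many such tuples, and \<open>\<Omega>(\<phi>)\<close> is their intersection.\<close>

lemma map_in_listset_PiE:
  "set ts \<subseteq> S \<Longrightarrow> \<omega> \<in> PiE S \<Gamma> \<Longrightarrow> map \<omega> ts \<in> listset (map \<Gamma> ts)"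
  by (induction ts) (auto simp: set_Cons_def PiE_iff)

lemma cylinder_in_cyl_events:
  assumes "set ts \<subseteq> S"
  shows "{\<omega> \<in> sample_space S \<Gamma>. P (map \<omega> ts)} \<in> cyl_events S \<Gamma>"
proof -
  define G where "G = {xs \<in> listset (map \<Gamma> ts). P xs}"
  have "{\<omega> \<in> sample_space S \<Gamma>. P (map \<omega> ts)} = {\<omega> \<in> sample_space S \<Gamma>. map \<omega> ts \<in> G}"
    using map_in_listset_PiE[OF assms] by (auto simp: sample_space_def G_def)
  moreover have "G \<subseteq> listset (map \<Gamma> ts)"
    by (simp add: G_def)
  ultimately show ?thesis
    using assms unfolding cyl_events_def by (intro CollectI exI[of _ ts] exI[of _ G] conjI) auto
qed

lemma INT_lists_in_cyl_events_delta:
  assumes "countable S" and "\<And>ts. set ts \<subseteq> S \<Longrightarrow> E ts \<in> cyl_events S \<Gamma>"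
  shows "(\<Inter>ts\<in>lists S. E ts) \<in> cyl_events_delta S \<Gamma>"
proof -
  have "countable (E ` lists S)" "E ` lists S \<noteq> {}" "E ` lists S \<subseteq> cyl_events S \<Gamma>"
    using assms by auto
  then show ?thesis
    unfolding cyl_events_delta_def by (intro CollectI exI[of _ "E ` lists S"]) simp
qed

lemma zip_map_self: "zip ts (map \<omega> ts) = map (\<lambda>t. (t, \<omega> t)) ts"
  by (induction ts) auto

lemma Omega_phi_eq_INT_lists:
  "Omega_phi S \<Gamma> p \<phi> = (\<Inter>ts\<in>lists S.
     {\<omega> \<in> sample_space S \<Gamma>. ts = [] \<or> joint_proj p (zip ts (map \<omega> ts)) \<phi> \<noteq> 0})"
  unfolding Omega_phi_def zip_map_self by auto

theorem lemma5:
  fixes S :: "'t set" and \<Gamma> :: "'t \<Rightarrow> 'a set"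
    and p :: "'t \<Rightarrow> 'a \<Rightarrow> ('h::chilbert_space \<Rightarrow> 'h)"
  assumes countable_Gamma: "\<And>t. t \<in> S \<Longrightarrow> countable (\<Gamma> t)"
    and proj: "\<And>t a. t \<in> S \<Longrightarrow> a \<in> \<Gamma> t \<Longrightarrow> is_projection (p t a)"
    and resolution: "\<And>t x. t \<in> S \<Longrightarrow> ((\<lambda>a. p t a x) has_sum x) (\<Gamma> t)"
    and countable_S: "countable S"
  shows "\<forall>\<phi>::'h. Omega_phi S \<Gamma> p \<phi> \<in> cyl_events_delta S \<Gamma>"
proof
  fix \<phi> :: 'h
  have "{\<omega> \<in> sample_space S \<Gamma>. ts = [] \<or> joint_proj p (zip ts (map \<omega> ts)) \<phi> \<noteq> 0}
      \<in> cyl_events S \<Gamma>" if "set ts \<subseteq> S" for ts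
    using cylinder_in_cyl_events[OF that, where P = "\<lambda>xs. ts = [] \<or> joint_proj p (zip ts xs) \<phi> \<noteq> 0"]
    by simp
  then show "Omega_phi S \<Gamma> p \<phi> \<in> cyl_events_delta S \<Gamma>"
    unfolding Omega_phi_eq_INT_lists by (rule INT_lists_in_cyl_events_delta[OF countable_S])
qed

end
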